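(* The family of all finite connected graphs together with all confluent epimorphisms between them is a projective Fraïssé family.
   Context: A graph is a pair $A=(V(A),E(A))$ with $E(A)\subseteq V(A)^2$ reflexive and symmetric. An epimorphism $f\colon A\to B$ is a map $V(A)\to V(B)$ sending edges to edges and surjective on vertices and on edges. A set $S\subseteq V(G)$ is disconnected if $S=P\cup Q$ with $P,Q$ nonempty disjoint and no edge of $G$ between $P$ and $Q$; otherwise connected. The component of $S$ containing $a\in S$ is the largest connected subset of $S$ containing $a$. An epimorphism $f\colon G\to H$ is confluent if for every connected $Q\subseteq V(H)$ and every component $C$ of $f^{-1}(Q)$ we have $f(C)=Q$. A class $\mathcal F$ of finite graphs with a fixed class of epimorphisms is a projective Fraïssé family if: (1) it has countably many isomorphism types; (2) the fixed epimorphisms are closed under composition and include identities; (3) for $B,C\in\mathcal F$ there are $D\in\mathcal F$ and fixed epimorphisms $D\to B$, $D\to C$; (4) for fixed epimorphisms $f\colon B\to A$, $g\colon C\to A$ there are $D\in\mathcal F$ and fixed epimorphisms $f_0\colon D\to B$, $g_0\colon D\to C$ with $f\circ f_0=g\circ g_0$. *)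

theory Defs
  imports Main "HOL-Library.Countable_Set"
begin

text \<open>A graph is a pair (V, E) with E a reflexive symmetric relation on V.
  Vertices are drawn from nat (every finite graph is isomorphic to one of these).\<close>

type_synonym graph = "nat set \<times> (nat \<times> nat) set"

definition verts :: "graph \<Rightarrow> nat set" where "verts G = fst G"
definition edges :: "graph \<Rightarrow> (nat \<times> nat) set" where "edges G = snd G"

definition is_graph :: "graph \<Rightarrow> bool" where
  "is_graph G \<longleftrightarrow> edges G \<subseteq> verts G \<times> verts G
     \<and> (\<forall>x\<in>verts G. (x, x) \<in> edges G)
     \<and> (\<forall>x y. (x, y) \<in> edges G \<longrightarrow> (y, x) \<in> edges G)"

definition epimorphism :: "graph \<Rightarrow> graph \<Rightarrow> (nat \<Rightarrow> nat) \<Rightarrow> bool" where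
  "epimorphism A B f \<longleftrightarrow>
     (\<forall>x y. (x, y) \<in> edges A \<longrightarrow> (f x, f y) \<in> edges B)
     \<and> f ` verts A = verts B
     \<and> (\<lambda>(x, y). (f x, f y)) ` edges A = edges B"

definition disconnected_set :: "graph \<Rightarrow> nat set \<Rightarrow> bool" where
  "disconnected_set G S \<longleftrightarrow> (\<exists>P Q. S = P \<union> Q \<and> P \<noteq> {} \<and> Q \<noteq> {} \<and> P \<inter> Q = {}
      \<and> (\<forall>p\<in>P. \<forall>q\<in>Q. (p, q) \<notin> edges G))"

definition connected_set :: "graph \<Rightarrow> nat set \<Rightarrow> bool" where
  "connected_set G S \<longleftrightarrow> \<not> disconnected_set G S"

definition is_component_at :: "graph \<Rightarrow> nat set \<Rightarrow> nat \<Rightarrow> nat set \<Rightarrow> bool" where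
  "is_component_at G S a C \<longleftrightarrow> C \<subseteq> S \<and> a \<in> C \<and> connected_set G C
     \<and> (\<forall>C'. C' \<subseteq> S \<and> a \<in> C' \<and> connected_set G C' \<longrightarrow> C' \<subseteq> C)"

definition is_component :: "graph \<Rightarrow> nat set \<Rightarrow> nat set \<Rightarrow> bool" where
  "is_component G S C \<longleftrightarrow> (\<exists>a\<in>S. is_component_at G S a C)"

definition confluent :: "graph \<Rightarrow> graph \<Rightarrow> (nat \<Rightarrow> nat) \<Rightarrow> bool" where
  "confluent G H f \<longleftrightarrow> epimorphism G H f \<and>
     (\<forall>Q C. Q \<subseteq> verts H \<and> connected_set H Q
        \<and> is_component G {x \<in> verts G. f x \<in> Q} C \<longrightarrow> f ` C = Q)"

definition graph_iso :: "graph \<Rightarrow> graph \<Rightarrow> bool" where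
  "graph_iso A B \<longleftrightarrow> (\<exists>h. bij_betw h (verts A) (verts B)
     \<and> (\<forall>x\<in>verts A. \<forall>y\<in>verts A. (x, y) \<in> edges A \<longleftrightarrow> (h x, h y) \<in> edges B))"

definition projective_Fraisse_family ::
  "graph set \<Rightarrow> (graph \<Rightarrow> graph \<Rightarrow> (nat \<Rightarrow> nat) \<Rightarrow> bool) \<Rightarrow> bool" where
  "projective_Fraisse_family F M \<longleftrightarrow>
     (\<forall>A\<in>F. is_graph A \<and> finite (verts A))
   \<and> (\<forall>A B f. M A B f \<longrightarrow> A \<in> F \<and> B \<in> F \<and> epimorphism A B f)
   \<and> countable (F // {(A, B). A \<in> F \<and> B \<in> F \<and> graph_iso A B})
   \<and> (\<forall>A B C f g. M A B f \<and> M B C g \<longrightarrow> M A C (g \<circ> f))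
   \<and> (\<forall>A\<in>F. M A A id)
   \<and> (\<forall>B\<in>F. \<forall>C\<in>F. \<exists>D\<in>F. \<exists>f g. M D B f \<and> M D C g)
   \<and> (\<forall>A B C f g. M B A f \<and> M C A g \<longrightarrow>
        (\<exists>D\<in>F. \<exists>f0 g0. M D B f0 \<and> M D C g0
           \<and> (\<forall>x\<in>verts D. f (f0 x) = g (g0 x))))"

definition finite_connected_graphs :: "graph set" where
  "finite_connected_graphs = {G. is_graph G \<and> finite (verts G) \<and> verts G \<noteq> {}
                                 \<and> connected_set G (verts G)}"

definition confluent_epis :: "graph \<Rightarrow> graph \<Rightarrow> (nat \<Rightarrow> nat) \<Rightarrow> bool" where
  "confluent_epis A B f \<longleftrightarrow> A \<in> finite_connected_graphs \<and> B \<in> finite_connected_graphs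
     \<and> confluent A B f"

end

(*
  The substance is amalgamation.  Given confluent f : B -> A and g : C -> A, take the fibre
  product P = {(b, c). f b = g c} with the product edge relation.  Confluence of g makes every
  component of a preimage under the projection P -> B map onto its target, and this property
  passes to each connected component D of P.  For an edge-preserving map between connected
  graphs this property already forces surjectivity on vertices and on edges, so D with its two
  projections is the required amalgam.  The joint projection property is amalgamation over the
  one-vertex graph, and countability holds because there are only countably many finite graphs
  on vertex set nat.
*)
theory Submission
  imports Defs
begin

lemma connected_setI:
  assumes "\<And>P Q. S = P \<union> Q \<Longrightarrow> P \<noteq> {} \<Longrightarrow> Q \<noteq> {} \<Longrightarrow> P \<inter> Q = {}
             \<Longrightarrow> \<exists>p\<in>P. \<exists>q\<in>Q. (p, q) \<in> edges G"
  shows "connected_set G S"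
  using assms unfolding connected_set_def disconnected_set_def by blast

lemma connected_setD:
  assumes "connected_set G S" "S = P \<union> Q" "P \<noteq> {}" "Q \<noteq> {}" "P \<inter> Q = {}"
  shows "\<exists>p\<in>P. \<exists>q\<in>Q. (p, q) \<in> edges G"
  using assms unfolding connected_set_def disconnected_set_def by blast

lemma connected_set_boundary_edge:
  assumes "connected_set G S" "X \<subseteq> S" "X \<noteq> {}" "X \<noteq> S"
  shows "\<exists>p\<in>X. \<exists>q\<in>S - X. (p, q) \<in> edges G"
  using connected_setD[OF assms(1), of X "S - X"] assms by blast

lemma connected_set_singleton: "connected_set G {a}"
proof (rule connected_setI)
  fix P Q assume "{a} = P \<union> Q" "P \<noteq> {}" "Q \<noteq> {}" "P \<inter> Q = {}"
  moreover from this have "P = {a}" "Q = {a}" by (metis Un_upper1 Un_upper2 subset_singletonD)+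
  ultimately show "\<exists>p\<in>P. \<exists>q\<in>Q. (p, q) \<in> edges G" by simp
qed

lemma connected_set_edge:
  assumes "(x, y) \<in> edges G" "(y, x) \<in> edges G"
  shows "connected_set G {x, y}"
proof (rule connected_setI)
  fix P Q assume PQ: "{x, y} = P \<union> Q" "P \<noteq> {}" "Q \<noteq> {}" "P \<inter> Q = {}"
  have "x \<in> P \<and> y \<in> Q \<or> y \<in> P \<and> x \<in> Q"
  proof (cases "x \<in> P")
    case True
    then have "Q \<subseteq> {y}" using PQ(1,4) by auto
    then show ?thesis using True PQ(3) by auto
  next
    case False
    then have "P \<subseteq> {y}" "x \<in> Q" using PQ(1) by auto
    then show ?thesis using PQ(2) by auto
  qed
  then show "\<exists>p\<in>P. \<exists>q\<in>Q. (p, q) \<in> edges G" using assms by blast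
qed

lemma connected_set_Union:
  assumes "\<And>X. X \<in> F \<Longrightarrow> connected_set G X" "\<And>X. X \<in> F \<Longrightarrow> a \<in> X"
  shows "connected_set G (\<Union>F)"
proof (rule connected_setI)
  fix P Q assume PQ: "\<Union>F = P \<union> Q" "P \<noteq> {}" "Q \<noteq> {}" "P \<inter> Q = {}"
  have "\<exists>X\<in>F. X \<inter> P \<noteq> {} \<and> X \<inter> Q \<noteq> {}"
  proof (cases "a \<in> P")
    case True
    obtain q X where "q \<in> Q" "X \<in> F" "q \<in> X" using PQ by blast
    then show ?thesis using True assms(2) by blast
  next
    case False
    obtain p X where "p \<in> P" "X \<in> F" "p \<in> X" using PQ by blast
    moreover have "a \<in> Q" using False PQ(1) assms(2) \<open>X \<in> F\<close> by blast
    ultimately show ?thesis using assms(2) by blast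
  qed
  then obtain X where X: "X \<in> F" "X \<inter> P \<noteq> {}" "X \<inter> Q \<noteq> {}" by blast
  have "X = X \<inter> P \<union> X \<inter> Q" using X(1) PQ(1) by blast
  then have "\<exists>p\<in>X \<inter> P. \<exists>q\<in>X \<inter> Q. (p, q) \<in> edges G"
    using connected_setD[OF assms(1)[OF X(1)]] X PQ(4) by blast
  then show "\<exists>p\<in>P. \<exists>q\<in>Q. (p, q) \<in> edges G" by blast
qed

lemma connected_set_Un:
  assumes "connected_set G X" "connected_set G Y" "a \<in> X" "a \<in> Y"
  shows "connected_set G (X \<union> Y)"
proof -
  have "connected_set G (\<Union>{X, Y})"
    by (rule connected_set_Union[where a = a]) (use assms in auto)
  then show ?thesis by simp
qed

lemma connected_set_image:
  assumes "connected_set G S"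
    and "\<And>x y. x \<in> S \<Longrightarrow> y \<in> S \<Longrightarrow> (x, y) \<in> edges G \<Longrightarrow> (h x, h y) \<in> edges H"
  shows "connected_set H (h ` S)"
proof (rule connected_setI)
  fix P Q assume PQ: "h ` S = P \<union> Q" "P \<noteq> {}" "Q \<noteq> {}" "P \<inter> Q = {}"
  let ?P = "S \<inter> h -` P" and ?Q = "S \<inter> h -` Q"
  have "?P \<noteq> {}" "?Q \<noteq> {}" using PQ(1-3) by (blast elim: equalityE)+
  have "\<exists>p\<in>?P. \<exists>q\<in>?Q. (p, q) \<in> edges G"
  proof (rule connected_setD[OF assms(1)])
    show "S = ?P \<union> ?Q" using PQ(1) by auto
    show "?P \<inter> ?Q = {}" using PQ(4) by auto
  qed fact+
  then show "\<exists>p\<in>P. \<exists>q\<in>Q. (p, q) \<in> edges H" using assms(2) by blast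
qed

lemma connected_set_edges_mono:
  assumes "connected_set G S"
    and "\<And>x y. x \<in> S \<Longrightarrow> y \<in> S \<Longrightarrow> (x, y) \<in> edges G \<Longrightarrow> (x, y) \<in> edges H"
  shows "connected_set H S"
  using connected_set_image[of G S id H] assms by simp

lemma component_at_exists:
  assumes "a \<in> S"
  shows "\<exists>C. is_component_at G S a C"
proof -
  let ?F = "{C. C \<subseteq> S \<and> a \<in> C \<and> connected_set G C}"
  have "connected_set G (\<Union>?F)" by (rule connected_set_Union) blast+
  moreover have "{a} \<in> ?F" using connected_set_singleton assms by blast
  ultimately have "is_component_at G S a (\<Union>?F)" unfolding is_component_at_def by blast
  then show ?thesis ..
qed

lemma component_at_maximal:
  assumes K: "is_component_at G S a K" and "X \<subseteq> S" "connected_set G X" "x \<in> X" "x \<in> K"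
  shows "X \<subseteq> K"
proof -
  have "K \<subseteq> S" "a \<in> K" "connected_set G K"
    and max: "\<And>C. C \<subseteq> S \<Longrightarrow> a \<in> C \<Longrightarrow> connected_set G C \<Longrightarrow> C \<subseteq> K"
    using K unfolding is_component_at_def by blast+
  have "K \<union> X \<subseteq> K"
  proof (rule max)
    show "connected_set G (K \<union> X)"
      using connected_set_Un[OF \<open>connected_set G K\<close> assms(3,5,4)] .
  qed (use \<open>K \<subseteq> S\<close> \<open>a \<in> K\<close> assms(2) in auto)
  then show ?thesis by blast
qed

lemma component_at_connected_set:
  assumes "connected_set G S" "a \<in> S"
  shows "is_component_at G S a S"
  using assms unfolding is_component_at_def by blast

lemma is_graph_refl: "is_graph G \<Longrightarrow> x \<in> verts G \<Longrightarrow> (x, x) \<in> edges G"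
  unfolding is_graph_def by blast

lemma is_graph_sym: "is_graph G \<Longrightarrow> (x, y) \<in> edges G \<Longrightarrow> (y, x) \<in> edges G"
  unfolding is_graph_def by blast

lemma is_graph_edge_verts: "is_graph G \<Longrightarrow> (x, y) \<in> edges G \<Longrightarrow> x \<in> verts G \<and> y \<in> verts G"
  unfolding is_graph_def by blast

lemma epimorphism_edge: "epimorphism A B f \<Longrightarrow> (x, y) \<in> edges A \<Longrightarrow> (f x, f y) \<in> edges B"
  unfolding epimorphism_def by blast

lemma epimorphism_verts: "epimorphism A B f \<Longrightarrow> f ` verts A = verts B"
  unfolding epimorphism_def by simp

lemma epimorphism_vert: "epimorphism A B f \<Longrightarrow> x \<in> verts A \<Longrightarrow> f x \<in> verts B"
  unfolding epimorphism_def by blast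

lemma epimorphism_edges: "epimorphism A B f \<Longrightarrow> map_prod f f ` edges A = edges B"
  unfolding epimorphism_def map_prod_def by simp

lemma epimorphismI:
  assumes "\<And>x y. (x, y) \<in> edges A \<Longrightarrow> (f x, f y) \<in> edges B"
    and "f ` verts A = verts B" and "map_prod f f ` edges A = edges B"
  shows "epimorphism A B f"
  using assms unfolding epimorphism_def map_prod_def by simp

lemma epimorphism_id: "epimorphism A A id"
  by (rule epimorphismI) (simp_all add: map_prod.id)

lemma epimorphism_comp:
  assumes "epimorphism A B f" "epimorphism B C g"
  shows "epimorphism A C (g \<circ> f)"
proof (rule epimorphismI)
  show "(g \<circ> f) ` verts A = verts C"
    using assms epimorphism_verts by (metis image_comp)
  show "map_prod (g \<circ> f) (g \<circ> f) ` edges A = edges C"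
    using assms epimorphism_edges by (metis image_comp map_prod.comp)
qed (use assms epimorphism_edge in auto)

definition components_onto :: "graph \<Rightarrow> graph \<Rightarrow> (nat \<Rightarrow> nat) \<Rightarrow> bool" where
  "components_onto G H f \<longleftrightarrow> (\<forall>Q C. Q \<subseteq> verts H \<and> connected_set H Q
     \<and> is_component G {x \<in> verts G. f x \<in> Q} C \<longrightarrow> f ` C = Q)"

lemma confluent_iff: "confluent G H f \<longleftrightarrow> epimorphism G H f \<and> components_onto G H f"
  unfolding confluent_def components_onto_def by blast

lemma components_ontoI:
  assumes "\<And>Q a K. Q \<subseteq> verts H \<Longrightarrow> connected_set H Q
             \<Longrightarrow> is_component_at G {x \<in> verts G. f x \<in> Q} a K \<Longrightarrow> f ` K = Q"
  shows "components_onto G H f"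
  unfolding components_onto_def is_component_def
proof (intro allI impI, elim conjE bexE)
  fix Q K a assume "Q \<subseteq> verts H" "connected_set H Q"
    "is_component_at G {x \<in> verts G. f x \<in> Q} a K"
  then show "f ` K = Q" by (rule assms)
qed

lemma components_ontoD:
  assumes "components_onto G H f" "Q \<subseteq> verts H" "connected_set H Q"
    and K: "is_component_at G {x \<in> verts G. f x \<in> Q} a K"
  shows "f ` K = Q"
proof -
  have "a \<in> {x \<in> verts G. f x \<in> Q}" using K unfolding is_component_at_def by blast
  then have "is_component G {x \<in> verts G. f x \<in> Q} K" using K unfolding is_component_def by blast
  then show ?thesis using assms(1-3) unfolding components_onto_def by blast
qed

lemma components_onto_id: "components_onto A A id"
proof (rule components_ontoI)
  fix Q a K assume "Q \<subseteq> verts A" "connected_set A Q"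
    and K: "is_component_at A {x \<in> verts A. id x \<in> Q} a K"
  have "{x \<in> verts A. id x \<in> Q} = Q" using \<open>Q \<subseteq> verts A\<close> by auto
  then have "is_component_at A Q a K" using K by simp
  then show "id ` K = Q" using \<open>connected_set A Q\<close> unfolding is_component_at_def by auto
qed

text \<open>The component of the preimage of \<open>Q\<close> under \<open>g \<circ> f\<close> is also a component of the
  preimage under \<open>f\<close> of the component \<open>L\<close> of \<open>g\<^sup>-\<^sup>1(Q)\<close> that contains its image.\<close>
lemma components_onto_comp:
  assumes ef: "epimorphism A B f" and wf: "components_onto A B f"
    and wg: "components_onto B C g"
  shows "components_onto A C (g \<circ> f)"
proof (rule components_ontoI)
  fix Q a K assume Q: "Q \<subseteq> verts C" "connected_set C Q"
    and K: "is_component_at A {x \<in> verts A. (g \<circ> f) x \<in> Q} a K"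
  let ?S = "{x \<in> verts A. (g \<circ> f) x \<in> Q}" and ?T = "{y \<in> verts B. g y \<in> Q}"
  have KS: "K \<subseteq> ?S" "a \<in> K" "connected_set A K"
    and Kmax: "\<And>X. X \<subseteq> ?S \<Longrightarrow> a \<in> X \<Longrightarrow> connected_set A X \<Longrightarrow> X \<subseteq> K"
    using K unfolding is_component_at_def by blast+
  have "f a \<in> ?T" using KS(1,2) epimorphism_vert[OF ef] by auto
  then obtain L where L: "is_component_at B ?T (f a) L" by (metis component_at_exists)
  then have LT: "L \<subseteq> ?T" "f a \<in> L" "connected_set B L" unfolding is_component_at_def by blast+
  have "f ` K \<subseteq> L"
  proof (rule component_at_maximal[OF L, of _ "f a"])
    show "f ` K \<subseteq> ?T" using KS(1) epimorphism_vert[OF ef] by auto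
    show "connected_set B (f ` K)"
      by (rule connected_set_image[OF KS(3)]) (rule epimorphism_edge[OF ef])
  qed (use KS(2) LT(2) in auto)
  have Kc: "is_component_at A {x \<in> verts A. f x \<in> L} a K"
    unfolding is_component_at_def
  proof (intro conjI allI impI)
    show "K \<subseteq> {x \<in> verts A. f x \<in> L}" using \<open>f ` K \<subseteq> L\<close> KS(1) by auto
    fix X assume "X \<subseteq> {x \<in> verts A. f x \<in> L} \<and> a \<in> X \<and> connected_set A X"
    then show "X \<subseteq> K" using LT(1) by (intro Kmax) auto
  qed (use KS(2,3) in blast)+
  have "L \<subseteq> verts B" using LT(1) by auto
  then have "f ` K = L" using components_ontoD[OF wf _ LT(3) Kc] by blast
  moreover have "g ` L = Q" using components_ontoD[OF wg Q L] .
  ultimately show "(g \<circ> f) ` K = Q" by (metis image_comp)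
qed

lemma connected_set_edge_across:
  assumes "connected_set G K" "f ` K = {b, b'}" "b \<noteq> b'"
  shows "\<exists>x\<in>K. \<exists>y\<in>K. f x = b \<and> f y = b' \<and> (x, y) \<in> edges G"
proof -
  let ?X = "{x \<in> K. f x = b}"
  have "b \<in> f ` K" "b' \<in> f ` K" using assms(2) by auto
  then obtain u v where "u \<in> ?X" "v \<in> K" "v \<notin> ?X" using assms(3) by auto
  then have "?X \<noteq> {}" "?X \<noteq> K" by blast+
  then obtain x y where "x \<in> ?X" "y \<in> K - ?X" "(x, y) \<in> edges G"
    using connected_set_boundary_edge[OF assms(1), of ?X] by blast
  moreover have "f y \<in> {b, b'}" using \<open>y \<in> K - ?X\<close> assms(2) by blast
  ultimately show ?thesis by auto
qed

text \<open>Surjectivity comes from applying \<open>components_onto\<close> to \<open>Q = V(H)\<close> and to the ends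
  \<open>Q = {b, b'}\<close> of an edge.\<close>
lemma epimorphism_if_components_onto:
  assumes gG: "is_graph G" and gH: "is_graph H"
    and cG: "connected_set G (verts G)" and ne: "verts G \<noteq> {}"
    and cH: "connected_set H (verts H)"
    and hom: "\<And>x y. (x, y) \<in> edges G \<Longrightarrow> (f x, f y) \<in> edges H"
    and w: "components_onto G H f"
  shows "epimorphism G H f"
proof (rule epimorphismI[OF hom])
  have fV: "f x \<in> verts H" if "x \<in> verts G" for x
    using is_graph_edge_verts[OF gH hom[OF is_graph_refl[OF gG that]]] by simp
  obtain a where "a \<in> verts G" using ne by blast
  moreover have "{x \<in> verts G. f x \<in> verts H} = verts G" using fV by auto
  ultimately have "is_component_at G {x \<in> verts G. f x \<in> verts H} a (verts G)"
    using component_at_connected_set[OF cG] by simp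
  then show V: "f ` verts G = verts H" using components_ontoD[OF w _ cH] by simp
  have "(b, b') \<in> map_prod f f ` edges G" if bb: "(b, b') \<in> edges H" for b b'
  proof -
    have bH: "{b, b'} \<subseteq> verts H" using is_graph_edge_verts[OF gH bb] by simp
    then obtain n where n: "n \<in> verts G" "f n = b" using V by (metis imageE insert_subset)
    obtain x y where "(x, y) \<in> edges G" "f x = b" "f y = b'"
    proof (cases "b = b'")
      case True
      then show ?thesis using that is_graph_refl[OF gG n(1)] n(2) by blast
    next
      case False
      have "n \<in> {x \<in> verts G. f x \<in> {b, b'}}" using n by simp
      then obtain K where K: "is_component_at G {x \<in> verts G. f x \<in> {b, b'}} n K"
        by (metis component_at_exists)
      then have "connected_set G K" unfolding is_component_at_def by blast
      moreover have "f ` K = {b, b'}"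
        using components_ontoD[OF w bH connected_set_edge[OF bb is_graph_sym[OF gH bb]] K] .
      ultimately show ?thesis using connected_set_edge_across False that by metis
    qed
    then show ?thesis by (metis map_prod_simp rev_image_eqI)
  qed
  then show "map_prod f f ` edges G = edges H" using hom by auto
qed

definition induced :: "graph \<Rightarrow> nat set \<Rightarrow> graph" where
  "induced G S = (S, {(x, y) \<in> edges G. x \<in> S \<and> y \<in> S})"

lemma verts_induced [simp]: "verts (induced G S) = S"
  unfolding induced_def verts_def by simp

lemma edges_induced_iff: "(x, y) \<in> edges (induced G S) \<longleftrightarrow> (x, y) \<in> edges G \<and> x \<in> S \<and> y \<in> S"
  unfolding induced_def edges_def by simp

lemma is_graph_induced: "is_graph G \<Longrightarrow> S \<subseteq> verts G \<Longrightarrow> is_graph (induced G S)"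
  unfolding is_graph_def by (auto simp: edges_induced_iff)

lemma connected_set_induced_iff:
  assumes "X \<subseteq> S"
  shows "connected_set (induced G S) X \<longleftrightarrow> connected_set G X"
proof
  assume "connected_set (induced G S) X"
  then show "connected_set G X" by (rule connected_set_edges_mono) (simp add: edges_induced_iff)
next
  assume "connected_set G X"
  then show "connected_set (induced G S) X"
    by (rule connected_set_edges_mono) (use assms in \<open>auto simp: edges_induced_iff\<close>)
qed

text \<open>A connected subset of \<open>G\<close> meeting a component \<open>D\<close> of \<open>G\<close> lies inside \<open>D\<close>, so the components
  of preimages in \<open>induced G D\<close> are components of preimages in \<open>G\<close>.\<close>
lemma components_onto_induced_component:
  assumes D: "is_component_at G (verts G) d D" and w: "components_onto G H f"
  shows "components_onto (induced G D) H f"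
proof (rule components_ontoI)
  fix Q a K assume Q: "Q \<subseteq> verts H" "connected_set H Q"
    and K: "is_component_at (induced G D) {x \<in> verts (induced G D). f x \<in> Q} a K"
  have DG: "D \<subseteq> verts G" using D unfolding is_component_at_def by blast
  have KD: "K \<subseteq> {x \<in> D. f x \<in> Q}" "a \<in> K" "connected_set (induced G D) K"
    and Kmax: "\<And>X. X \<subseteq> {x \<in> D. f x \<in> Q} \<Longrightarrow> a \<in> X \<Longrightarrow> connected_set (induced G D) X \<Longrightarrow> X \<subseteq> K"
    using K unfolding is_component_at_def by auto
  have "is_component_at G {x \<in> verts G. f x \<in> Q} a K"
    unfolding is_component_at_def
  proof (intro conjI allI impI)
    show "K \<subseteq> {x \<in> verts G. f x \<in> Q}" using KD(1) DG by blast
    show "connected_set G K" using KD(1,3) connected_set_induced_iff[of K D G] by blast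
    fix X assume X: "X \<subseteq> {x \<in> verts G. f x \<in> Q} \<and> a \<in> X \<and> connected_set G X"
    have "X \<subseteq> D" using component_at_maximal[OF D, of X a] X KD(1,2) by blast
    then show "X \<subseteq> K" using X connected_set_induced_iff[of X D G] by (intro Kmax) auto
  qed (fact KD(2))
  then show "f ` K = Q" using components_ontoD[OF w Q] by blast
qed

definition is_fibre_product ::
  "graph \<Rightarrow> graph \<Rightarrow> graph \<Rightarrow> (nat \<Rightarrow> nat) \<Rightarrow> (nat \<Rightarrow> nat) \<Rightarrow> (nat \<Rightarrow> nat) \<Rightarrow> (nat \<Rightarrow> nat) \<Rightarrow> bool"
where
  "is_fibre_product P B C f g p r \<longleftrightarrow>
     (\<forall>n\<in>verts P. p n \<in> verts B \<and> r n \<in> verts C \<and> f (p n) = g (r n))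
   \<and> (\<forall>b\<in>verts B. \<forall>c\<in>verts C. f b = g c \<longrightarrow> (\<exists>n\<in>verts P. p n = b \<and> r n = c))
   \<and> inj_on (\<lambda>n. (p n, r n)) (verts P)
   \<and> (\<forall>n m. (n, m) \<in> edges P \<longleftrightarrow>
        n \<in> verts P \<and> m \<in> verts P \<and> (p n, p m) \<in> edges B \<and> (r n, r m) \<in> edges C)"

lemma fibre_product_exists: "\<exists>P p r. is_fibre_product P B C f g p r"
proof -
  define p where "p n = fst (prod_decode n)" for n
  define r where "r n = snd (prod_decode n)" for n
  define V where "V = {n. p n \<in> verts B \<and> r n \<in> verts C \<and> f (p n) = g (r n)}"
  define E where "E = {(n, m). n \<in> V \<and> m \<in> V \<and> (p n, p m) \<in> edges B \<and> (r n, r m) \<in> edges C}"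
  have "\<exists>n\<in>V. p n = b \<and> r n = c" if "b \<in> verts B" "c \<in> verts C" "f b = g c" for b c
  proof
    show "prod_encode (b, c) \<in> V" using that unfolding V_def p_def r_def by simp
  qed (simp add: p_def r_def)
  moreover have "inj_on (\<lambda>n. (p n, r n)) V"
    unfolding p_def r_def prod.collapse by (rule inj_prod_decode)
  moreover have "\<forall>n\<in>V. p n \<in> verts B \<and> r n \<in> verts C \<and> f (p n) = g (r n)"
    unfolding V_def by blast
  ultimately have "is_fibre_product (V, E) B C f g p r"
    unfolding is_fibre_product_def verts_def edges_def fst_conv snd_conv E_def by blast
  then show ?thesis by blast
qed

lemma is_fibre_product_swap:
  assumes "is_fibre_product P B C f g p r"
  shows "is_fibre_product P C B g f r p"
proof -
  have "inj_on (\<lambda>n. (r n, p n)) (verts P)"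
    using assms unfolding is_fibre_product_def inj_on_def by simp
  then show ?thesis using assms unfolding is_fibre_product_def by (simp add: conj_commute)
qed

lemma is_graph_fibre_product:
  assumes gB: "is_graph B" and gC: "is_graph C" and P: "is_fibre_product P B C f g p r"
  shows "is_graph P"
proof -
  have PV: "\<And>n. n \<in> verts P \<Longrightarrow> p n \<in> verts B \<and> r n \<in> verts C"
    and PE: "\<And>n m. (n, m) \<in> edges P \<longleftrightarrow>
               n \<in> verts P \<and> m \<in> verts P \<and> (p n, p m) \<in> edges B \<and> (r n, r m) \<in> edges C"
    using P unfolding is_fibre_product_def by blast+
  show ?thesis
    unfolding is_graph_def
    using PV PE is_graph_refl[OF gB] is_graph_refl[OF gC] is_graph_sym[OF gB] is_graph_sym[OF gC]
    by auto
qed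

lemma finite_fibre_product:
  assumes "finite (verts B)" "finite (verts C)" "is_fibre_product P B C f g p r"
  shows "finite (verts P)"
proof -
  have "(\<lambda>n. (p n, r n)) ` verts P \<subseteq> verts B \<times> verts C"
    using assms(3) unfolding is_fibre_product_def by auto
  then have "finite ((\<lambda>n. (p n, r n)) ` verts P)" using assms(1,2) by (simp add: finite_subset)
  then show ?thesis using assms(3) finite_image_iff unfolding is_fibre_product_def by blast
qed

text \<open>If a component \<open>K\<close> of \<open>p\<^sup>-\<^sup>1(Q)\<close> missed a neighbour \<open>q'\<close> of \<open>q = p k\<close>, \<open>k \<in> K\<close>, then the
  component \<open>L\<close> of \<open>g\<^sup>-\<^sup>1{f q, f q'}\<close> containing \<open>r k\<close>, which maps onto \<open>{f q, f q'}\<close> by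
  confluence of \<open>g\<close>, lifts to a connected subset of \<open>p\<^sup>-\<^sup>1{q, q'}\<close> adjacent to \<open>k\<close> and
  containing a point over \<open>q'\<close>; maximality of \<open>K\<close> then gives a contradiction.\<close>
lemma fibre_product_components_onto:
  assumes gB: "is_graph B" and gC: "is_graph C"
    and ef: "epimorphism B A f" and cg: "components_onto C A g"
    and P: "is_fibre_product P B C f g p r"
  shows "components_onto P B p"
proof (rule components_ontoI)
  have PV: "\<And>n. n \<in> verts P \<Longrightarrow> p n \<in> verts B \<and> r n \<in> verts C \<and> f (p n) = g (r n)"
    and lift: "\<And>b c. b \<in> verts B \<Longrightarrow> c \<in> verts C \<Longrightarrow> f b = g c \<Longrightarrow> \<exists>n\<in>verts P. p n = b \<and> r n = c"
    and PE: "\<And>n m. (n, m) \<in> edges P \<longleftrightarrow>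
               n \<in> verts P \<and> m \<in> verts P \<and> (p n, p m) \<in> edges B \<and> (r n, r m) \<in> edges C"
    using P unfolding is_fibre_product_def by blast+
  fix Q a K assume Q: "Q \<subseteq> verts B" "connected_set B Q"
    and K: "is_component_at P {x \<in> verts P. p x \<in> Q} a K"
  let ?S = "{x \<in> verts P. p x \<in> Q}"
  have KS: "K \<subseteq> ?S" "a \<in> K" using K unfolding is_component_at_def by blast+
  show "p ` K = Q"
  proof (rule ccontr)
    assume "p ` K \<noteq> Q"
    moreover have "p ` K \<subseteq> Q" "p ` K \<noteq> {}" using KS by auto
    ultimately obtain q q' where "q \<in> p ` K" and q': "q' \<in> Q - p ` K" and qq': "(q, q') \<in> edges B"
      using connected_set_boundary_edge[OF Q(2) \<open>p ` K \<subseteq> Q\<close>] by blast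
    then obtain k where k: "k \<in> K" "q = p k" by blast
    define c where "c = r k"
    have kP: "k \<in> verts P" using k KS(1) by blast
    have qB: "q \<in> verts B" and cC: "c \<in> verts C" and fq: "f q = g c" and qQ: "q \<in> Q"
      using PV[OF kP] k KS(1) unfolding c_def by auto
    have q'B: "q' \<in> verts B" using q' Q(1) by blast
    note qq' = qq' is_graph_sym[OF gB qq']
    let ?U = "{f q, f q'}"
    have U: "?U \<subseteq> verts A" "connected_set A ?U"
      using epimorphism_vert[OF ef] qB q'B connected_set_edge epimorphism_edge[OF ef] qq' by auto
    have "c \<in> {x \<in> verts C. g x \<in> ?U}" using cC fq by simp
    then obtain L where L: "is_component_at C {x \<in> verts C. g x \<in> ?U} c L"
      by (metis component_at_exists)
    have LU: "L \<subseteq> {x \<in> verts C. g x \<in> ?U}" "c \<in> L" "connected_set C L"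
      using L unfolding is_component_at_def by blast+
    have gL: "g ` L = ?U" using components_ontoD[OF cg U L] .
    define \<beta> where "\<beta> d = (if g d = f q' then q' else q)" for d
    have \<beta>B: "\<beta> d \<in> {q, q'}" for d unfolding \<beta>_def by simp
    have \<beta>Q: "\<beta> d \<in> Q" for d using \<beta>B[of d] qQ q' by blast
    have \<beta>E: "(\<beta> d, \<beta> d') \<in> edges B" for d d'
      using \<beta>B[of d] \<beta>B[of d'] qq' is_graph_refl[OF gB] qB q'B by auto
    have "\<exists>n\<in>verts P. p n = \<beta> d \<and> r n = d" if "d \<in> L" for d
      using lift[of "\<beta> d" d] that LU(1) \<beta>B qB q'B fq unfolding \<beta>_def by auto
    then obtain h where h: "\<And>d. d \<in> L \<Longrightarrow> h d \<in> verts P \<and> p (h d) = \<beta> d \<and> r (h d) = d"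
      by metis
    have "connected_set P (h ` L)"
      by (rule connected_set_image[OF LU(3)]) (use PE h \<beta>E in auto)
    moreover have "connected_set P {k, h c}"
      using h[OF LU(2)] kP \<beta>E[of c c] qq' PE is_graph_refl[OF gC cC] is_graph_sym[OF gB]
      unfolding k(2) c_def \<beta>_def by (intro connected_set_edge) auto
    ultimately have "connected_set P ({k, h c} \<union> h ` L)"
      using connected_set_Un LU(2) by blast
    moreover have "{k, h c} \<union> h ` L \<subseteq> ?S"
      using kP k KS h \<beta>Q LU(2) by auto
    ultimately have "h ` L \<subseteq> K"
      using component_at_maximal[OF K, of "{k, h c} \<union> h ` L" k] k by blast
    moreover obtain d where "d \<in> L" "g d = f q'" using gL by (metis imageE insertCI)
    ultimately have "q' \<in> p ` K" using h unfolding \<beta>_def by (metis image_eqI subsetD)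
    then show False using q' by blast
  qed
qed

lemma finite_connected_graphsD:
  assumes "G \<in> finite_connected_graphs"
  shows "is_graph G" "finite (verts G)" "verts G \<noteq> {}" "connected_set G (verts G)"
  using assms unfolding finite_connected_graphs_def by auto

lemma induced_component_in_finite_connected_graphs:
  assumes "is_graph G" "finite (verts G)" and D: "is_component_at G (verts G) n D"
  shows "induced G D \<in> finite_connected_graphs"
proof -
  have "D \<subseteq> verts G" "n \<in> D" "connected_set G D" using D unfolding is_component_at_def by blast+
  then show ?thesis
    using assms(1,2) is_graph_induced connected_set_induced_iff[of D D G] finite_subset
    unfolding finite_connected_graphs_def by auto
qed

lemma confluent_epis_iff:
  "confluent_epis G H f \<longleftrightarrow> G \<in> finite_connected_graphs \<and> H \<in> finite_connected_graphs
     \<and> epimorphism G H f \<and> components_onto G H f"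
  unfolding confluent_epis_def confluent_iff by blast

lemma confluent_episI:
  assumes G: "G \<in> finite_connected_graphs" and H: "H \<in> finite_connected_graphs"
    and "\<And>x y. (x, y) \<in> edges G \<Longrightarrow> (f x, f y) \<in> edges H" and "components_onto G H f"
  shows "confluent_epis G H f"
  using epimorphism_if_components_onto[OF finite_connected_graphsD(1)[OF G]
      finite_connected_graphsD(1)[OF H] finite_connected_graphsD(4,3)[OF G]
      finite_connected_graphsD(4)[OF H]] assms
  unfolding confluent_epis_iff by blast

lemma confluent_epis_induced_component:
  assumes "is_graph G" "finite (verts G)" and D: "is_component_at G (verts G) n D"
    and "H \<in> finite_connected_graphs"
    and "\<And>x y. (x, y) \<in> edges G \<Longrightarrow> (f x, f y) \<in> edges H" and "components_onto G H f"
  shows "confluent_epis (induced G D) H f"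
proof (rule confluent_episI)
  show "induced G D \<in> finite_connected_graphs"
    using induced_component_in_finite_connected_graphs[OF assms(1,2) D] .
  show "components_onto (induced G D) H f"
    using components_onto_induced_component[OF D assms(6)] .
qed (use assms(4,5) in \<open>auto simp: edges_induced_iff\<close>)

lemma amalgamation_confluent_epis:
  assumes "confluent_epis B A f" "confluent_epis C A g"
  shows "\<exists>D\<in>finite_connected_graphs. \<exists>f0 g0. confluent_epis D B f0 \<and> confluent_epis D C g0
           \<and> (\<forall>x\<in>verts D. f (f0 x) = g (g0 x))"
proof -
  have FB: "B \<in> finite_connected_graphs" and FC: "C \<in> finite_connected_graphs"
    and ef: "epimorphism B A f" and eg: "epimorphism C A g"
    and wf: "components_onto B A f" and wg: "components_onto C A g"
    using assms unfolding confluent_epis_iff by blast+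
  note gB = finite_connected_graphsD(1)[OF FB] and gC = finite_connected_graphsD(1)[OF FC]
  obtain P p r where P: "is_fibre_product P B C f g p r" using fibre_product_exists by blast
  have PV: "\<And>n. n \<in> verts P \<Longrightarrow> f (p n) = g (r n)"
    and PE: "\<And>n m. (n, m) \<in> edges P \<Longrightarrow> (p n, p m) \<in> edges B \<and> (r n, r m) \<in> edges C"
    using P unfolding is_fibre_product_def by blast+
  have gP: "is_graph P" using is_graph_fibre_product[OF gB gC P] .
  have finP: "finite (verts P)"
    using finite_fibre_product[OF finite_connected_graphsD(2)[OF FB]
        finite_connected_graphsD(2)[OF FC] P] .
  obtain b where b: "b \<in> verts B" using finite_connected_graphsD(3)[OF FB] by blast
  then have "f b \<in> g ` verts C" using epimorphism_vert[OF ef] epimorphism_verts[OF eg] by simp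
  then obtain c where "c \<in> verts C" "f b = g c" by blast
  then obtain n where "n \<in> verts P" using P b unfolding is_fibre_product_def by blast
  then obtain D where D: "is_component_at P (verts P) n D" by (metis component_at_exists)
  have "confluent_epis (induced P D) B p"
    using confluent_epis_induced_component[OF gP finP D FB _
        fibre_product_components_onto[OF gB gC ef wg P]] PE by blast
  moreover have "confluent_epis (induced P D) C r"
    using confluent_epis_induced_component[OF gP finP D FC _
        fibre_product_components_onto[OF gC gB eg wf is_fibre_product_swap[OF P]]] PE by blast
  moreover have "\<forall>x\<in>verts (induced P D). f (p x) = g (r x)"
    using D PV unfolding is_component_at_def by auto
  moreover have "induced P D \<in> finite_connected_graphs"
    using calculation(1) unfolding confluent_epis_iff by blast
  ultimately show ?thesis by blast
qed

definition point_graph :: graph where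
  "point_graph = ({0}, {(0, 0)})"

lemma point_graph_in_finite_connected_graphs: "point_graph \<in> finite_connected_graphs"
  unfolding finite_connected_graphs_def is_graph_def point_graph_def verts_def edges_def
  using connected_set_singleton by simp

lemma confluent_epis_point_graph:
  assumes "G \<in> finite_connected_graphs"
  shows "confluent_epis G point_graph (\<lambda>_. 0)"
proof (rule confluent_episI[OF assms point_graph_in_finite_connected_graphs])
  show "((\<lambda>_. 0) x, (\<lambda>_. 0) y) \<in> edges point_graph" for x y
    unfolding point_graph_def edges_def by simp
  show "components_onto G point_graph (\<lambda>_. 0)"
  proof (rule components_ontoI)
    fix Q a K assume "Q \<subseteq> verts point_graph"
      and "is_component_at G {x \<in> verts G. (0::nat) \<in> Q} a K"
    then have "Q = {0}" "a \<in> K" unfolding is_component_at_def point_graph_def verts_def by auto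
    then show "(\<lambda>_. 0) ` K = Q" by auto
  qed
qed

lemma countable_quotient_finite_connected_graphs: "countable (finite_connected_graphs // R)"
proof -
  have "finite_connected_graphs \<subseteq> Collect finite \<times> Collect finite"
  proof
    fix G assume G: "G \<in> finite_connected_graphs"
    then have "edges G \<subseteq> verts G \<times> verts G" "finite (verts G)"
      using finite_connected_graphsD[OF G] unfolding is_graph_def by simp_all
    then have "finite (edges G)" "finite (verts G)" by (auto intro: finite_subset)
    then show "G \<in> Collect finite \<times> Collect finite"
      unfolding verts_def edges_def by (cases G) simp
  qed
  then have "countable finite_connected_graphs"
    by (rule countable_subset) (intro countable_SIGMA countable_Collect_finite)
  moreover have "finite_connected_graphs // R \<subseteq> (\<lambda>x. R `` {x}) ` finite_connected_graphs"
    unfolding quotient_def by blast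
  ultimately show ?thesis by (blast intro: countable_subset)
qed

lemma confluent_epis_id: "A \<in> finite_connected_graphs \<Longrightarrow> confluent_epis A A id"
  unfolding confluent_epis_iff using epimorphism_id components_onto_id by blast

lemma confluent_epis_comp:
  "confluent_epis A B f \<Longrightarrow> confluent_epis B C g \<Longrightarrow> confluent_epis A C (g \<circ> f)"
  unfolding confluent_epis_iff using epimorphism_comp components_onto_comp by blast

lemma confluent_epis_joint_projection:
  assumes "B \<in> finite_connected_graphs" "C \<in> finite_connected_graphs"
  shows "\<exists>D\<in>finite_connected_graphs. \<exists>f g. confluent_epis D B f \<and> confluent_epis D C g"
  using amalgamation_confluent_epis[OF confluent_epis_point_graph confluent_epis_point_graph] assms
  by blast

theorem corollary4p13:
  shows "projective_Fraisse_family finite_connected_graphs confluent_epis"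
  unfolding projective_Fraisse_family_def
proof (intro conjI allI impI ballI)
  show "countable (finite_connected_graphs //
    {(A, B). A \<in> finite_connected_graphs \<and> B \<in> finite_connected_graphs \<and> graph_iso A B})"
    by (rule countable_quotient_finite_connected_graphs)
qed (use finite_connected_graphsD(1,2) confluent_epis_id confluent_epis_comp
       confluent_epis_joint_projection amalgamation_confluent_epis
     in \<open>auto simp: confluent_epis_iff\<close>)

end
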